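(* In the setting described in the context, suppose that $(\mathrm{Id}_V\otimes Y)(Y\otimes \mathrm{Id}_V)w-qw\in\Upsilon^{(3)}$ for all $w\in V\otimes I_2$. Then for all $x,y\in V$ the following identity holds in $\bigwedge^2V^*$: $$\ell_{xy}\wedge\ell'_{xy}=\ell_{xx}\wedge\ell'_{yy}.$$
   Context: Let $V$ be a $3$-dimensional vector space over a field $k$ and $\zeta\in GL(V)$. Write $xy$ for $x\otimes y$ in the tensor algebra $T(V)$. Put $x\barwedge y=\zeta(x)y-\zeta(y)x\in V^{\otimes 2}$ and $x\barwedge y\barwedge z=\zeta^2(x)\zeta(y)z+\zeta^2(y)\zeta(z)x+\zeta^2(z)\zeta(x)y-\zeta^2(x)\zeta(z)y-\zeta^2(y)\zeta(x)z-\zeta^2(z)\zeta(y)x\in V^{\otimes3}$. Let $I$ be the two-sided ideal of $T(V)$ generated by all $x\barwedge y$, $A=T(V)/I$, $I_2=I\cap V^{\otimes 2}$ (spanned by the $x\barwedge y$), and $\Upsilon^{(3)}=(I_2\otimes V)\cap(V\otimes I_2)$, the one-dimensional space spanned by the $x\barwedge y\barwedge z$. The maps $x\wedge y\mapsto x\barwedge y$ and $x\wedge y\wedge z\mapsto x\barwedge y\barwedge z$ are linear isomorphisms $\bigwedge^2V\cong I_2$, $\bigwedge^3V\cong\Upsilon^{(3)}$; transporting the exterior product, for $x\in V$ and $w\in I_2$ one gets $x\barwedge w\in\Upsilon^{(3)}$, bilinear, with $x\barwedge(y\barwedge z)=x\barwedge y\barwedge z$. Let $R$ be a Hecke symmetry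 on $V$ with parameter $q\ne0$ (i.e. $R$ satisfies the braid equation $(R\otimes\mathrm{Id})(\mathrm{Id}\otimes R)(R\otimes\mathrm{Id})=(\mathrm{Id}\otimes R)(R\otimes\mathrm{Id})(\mathrm{Id}\otimes R)$ and $(R-q\,\mathrm{Id})(R+\mathrm{Id})=0$) such that $\mathbb{S}(V,R)=A$, i.e. $\mathrm{Im}(R-q\,\mathrm{Id}_{V\otimes V})=I_2$. Put $R'=(\zeta^{-1}\otimes\zeta^{-1})R(\zeta\otimes\zeta)$, $Y=q\,\mathrm{Id}-R$, $Y'=q\,\mathrm{Id}-R'$. Fix a nonzero alternating trilinear form $\omega$ on $V$ and let $\tilde\omega:\Upsilon^{(3)}\to k$ be the linear map with $\tilde\omega(x\barwedge y\barwedge z)=\omega(x,y,z)$. Define linear forms $\ell_{xy},\ell'_{xy}\in V^*$ for $x,y\in V$ by $\ell_{xy}(z)=\tilde\omega\big(x\barwedge Y(\zeta(y)z)\big)$ and $\ell'_{xy}(z)=\tilde\omega\big(x\barwedge Y'(\zeta(y)z)\big)$. *)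

theory Defs
  imports "HOL-Analysis.Analysis"
begin

text \<open>Coordinates: V = 'k^'n with CARD('n) = 3; V\<otimes>V = 'k^('n\<times>'n);
  V\<otimes>V\<otimes>V = 'k^('n\<times>'n\<times>'n), index (i,j,l) standing for e_i e_j e_l.\<close>

definition tensor2 :: "'k::field^'n \<Rightarrow> 'k^'n \<Rightarrow> 'k^('n::finite\<times>'n)" where
  "tensor2 x y = vec_lambda (\<lambda>(i,j). x$i * y$j)"

definition tensor3 :: "'k::field^'n \<Rightarrow> 'k^'n \<Rightarrow> 'k^'n \<Rightarrow> 'k^('n::finite\<times>'n\<times>'n)" where
  "tensor3 x y z = vec_lambda (\<lambda>(i,j,l). x$i * y$j * z$l)"

definition tensor21 :: "'k::field^('n\<times>'n) \<Rightarrow> 'k^'n \<Rightarrow> 'k^('n::finite\<times>'n\<times>'n)" where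
  "tensor21 w x = vec_lambda (\<lambda>(i,j,l). w$(i,j) * x$l)"

definition tensor12 :: "'k::field^'n \<Rightarrow> 'k^('n\<times>'n) \<Rightarrow> 'k^('n::finite\<times>'n\<times>'n)" where
  "tensor12 x w = vec_lambda (\<lambda>(i,j,l). x$i * w$(j,l))"

text \<open>A \<otimes> Id_V and Id_V \<otimes> A as operators on V\<otimes>V\<otimes>V.\<close>
definition lift12 :: "'k::field^('n\<times>'n)^('n\<times>'n) \<Rightarrow> 'k^('n::finite\<times>'n\<times>'n)^('n\<times>'n\<times>'n)" where
  "lift12 A = vec_lambda (\<lambda>(i,j,l). vec_lambda (\<lambda>(i',j',l').
      A$(i,j)$(i',j') * (if l = l' then 1 else 0)))"

definition lift23 :: "'k::field^('n\<times>'n)^('n\<times>'n) \<Rightarrow> 'k^('n::finite\<times>'n\<times>'n)^('n\<times>'n\<times>'n)" where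
  "lift23 A = vec_lambda (\<lambda>(i,j,l). vec_lambda (\<lambda>(i',j',l').
      (if i = i' then 1 else 0) * A$(j,l)$(j',l')))"

definition kron :: "'k::field^'n^'n \<Rightarrow> 'k^'n^'n \<Rightarrow> 'k^('n::finite\<times>'n)^('n\<times>'n)" where
  "kron A B = vec_lambda (\<lambda>(i,j). vec_lambda (\<lambda>(i',j'). A$i$i' * B$j$j'))"

text \<open>x \<barwedge> y = \<zeta>(x)y - \<zeta>(y)x, with \<zeta> given by the matrix Z.\<close>
definition barwedge2 :: "'k::field^'n^'n \<Rightarrow> 'k^'n \<Rightarrow> 'k^'n \<Rightarrow> 'k^('n::finite\<times>'n)" where
  "barwedge2 Z x y = tensor2 (Z *v x) y - tensor2 (Z *v y) x"

definition barwedge3 :: "'k::field^'n^'n \<Rightarrow> 'k^'n \<Rightarrow> 'k^'n \<Rightarrow> 'k^'n \<Rightarrow> 'k^('n::finite\<times>'n\<times>'n)" where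
  "barwedge3 Z x y z =
     tensor3 ((Z ** Z) *v x) (Z *v y) z + tensor3 ((Z ** Z) *v y) (Z *v z) x
   + tensor3 ((Z ** Z) *v z) (Z *v x) y - tensor3 ((Z ** Z) *v x) (Z *v z) y
   - tensor3 ((Z ** Z) *v y) (Z *v x) z - tensor3 ((Z ** Z) *v z) (Z *v y) x"

definition I2 :: "'k::field^'n^'n \<Rightarrow> ('k^('n::finite\<times>'n)) set" where
  "I2 Z = vec.span {barwedge2 Z x y | x y. True}"

definition I2_tensor_V :: "'k::field^'n^'n \<Rightarrow> ('k^('n::finite\<times>'n\<times>'n)) set" where
  "I2_tensor_V Z = vec.span {tensor21 w x | w x. w \<in> I2 Z}"

definition V_tensor_I2 :: "'k::field^'n^'n \<Rightarrow> ('k^('n::finite\<times>'n\<times>'n)) set" where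
  "V_tensor_I2 Z = vec.span {tensor12 x w | x w. w \<in> I2 Z}"

definition Upsilon3 :: "'k::field^'n^'n \<Rightarrow> ('k^('n::finite\<times>'n\<times>'n)) set" where
  "Upsilon3 Z = I2_tensor_V Z \<inter> V_tensor_I2 Z"

text \<open>x \<barwedge> w for w \<in> I_2, transported from the exterior product via the
  isomorphisms x\<and>y \<mapsto> x\<barwedge>y, x\<and>y\<and>z \<mapsto> x\<barwedge>y\<barwedge>z (bilinear extension of
  x \<barwedge> (a \<barwedge> b) = x \<barwedge> a \<barwedge> b).\<close>
definition barwedge_vw :: "'k::field^'n^'n \<Rightarrow> 'k^'n \<Rightarrow> 'k^('n::finite\<times>'n) \<Rightarrow> 'k^('n\<times>'n\<times>'n)" where
  "barwedge_vw Z x w = (THE t. \<exists>ps. w = sum_list (map (\<lambda>(a,b). barwedge2 Z a b) ps)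
        \<and> t = sum_list (map (\<lambda>(a,b). barwedge3 Z x a b) ps))"

definition omega_tilde :: "'k::field^'n^'n \<Rightarrow> ('k^'n \<Rightarrow> 'k^'n \<Rightarrow> 'k^'n \<Rightarrow> 'k)
      \<Rightarrow> 'k^('n::finite\<times>'n\<times>'n) \<Rightarrow> 'k" where
  "omega_tilde Z \<omega> t = (THE c. \<exists>ts. t = sum_list (map (\<lambda>(x,y,z). barwedge3 Z x y z) ts)
        \<and> c = sum_list (map (\<lambda>(x,y,z). \<omega> x y z) ts))"

definition ell :: "'k::field^'n^'n \<Rightarrow> ('k^'n \<Rightarrow> 'k^'n \<Rightarrow> 'k^'n \<Rightarrow> 'k)
      \<Rightarrow> 'k^('n::finite\<times>'n)^('n\<times>'n) \<Rightarrow> 'k^'n \<Rightarrow> 'k^'n \<Rightarrow> 'k^'n \<Rightarrow> 'k" where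
  "ell Z \<omega> Y x y = (\<lambda>z. omega_tilde Z \<omega> (barwedge_vw Z x (Y *v tensor2 (Z *v y) z)))"

definition linear_form :: "('k::field^'n::finite \<Rightarrow> 'k) \<Rightarrow> bool" where
  "linear_form f \<longleftrightarrow> (\<forall>u v. f (u + v) = f u + f v) \<and> (\<forall>c u. f (c *s u) = c * f u)"

definition trilinear :: "('k::field^'n::finite \<Rightarrow> 'k^'n \<Rightarrow> 'k^'n \<Rightarrow> 'k) \<Rightarrow> bool" where
  "trilinear \<omega> \<longleftrightarrow> (\<forall>y z. linear_form (\<lambda>x. \<omega> x y z)) \<and> (\<forall>x z. linear_form (\<lambda>y. \<omega> x y z))
       \<and> (\<forall>x y. linear_form (\<lambda>z. \<omega> x y z))"

definition alternating3 :: "('k::field^'n::finite \<Rightarrow> 'k^'n \<Rightarrow> 'k^'n \<Rightarrow> 'k) \<Rightarrow> bool" where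
  "alternating3 \<omega> \<longleftrightarrow> trilinear \<omega> \<and> (\<forall>x z. \<omega> x x z = 0) \<and> (\<forall>x y. \<omega> x y y = 0)
       \<and> (\<forall>x y. \<omega> x y x = 0)"

text \<open>\<Lambda>^2 V^* is identified with alternating bilinear forms on V:
  (l \<and> m)(u,v) = l(u)m(v) - l(v)m(u).\<close>
definition wedge_forms :: "('k::field^'n::finite \<Rightarrow> 'k) \<Rightarrow> ('k^'n \<Rightarrow> 'k) \<Rightarrow> 'k^'n \<Rightarrow> 'k^'n \<Rightarrow> 'k" where
  "wedge_forms l m = (\<lambda>u v. l u * m v - l v * m u)"

end

theory Submission
  imports Defs
begin

text \<open>
  Conjugating by \<open>(\<zeta>\<^sup>2)\<inverse> \<otimes> \<zeta>\<inverse> \<otimes> 1\<close> turns \<open>I\<^sub>2 \<otimes> V\<close> and \<open>V \<otimes> I\<^sub>2\<close> into tensors alternating in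
  the first two, resp. the last two, slots. In dimension three such tensors form the line spanned
  by \<open>e\<^sub>1 \<and> e\<^sub>2 \<and> e\<^sub>3\<close>, so \<open>\<Upsilon>\<^sup>(\<^sup>3\<^sup>)\<close> is spanned by \<open>e\<^sub>1 \<barwedge> e\<^sub>2 \<barwedge> e\<^sub>3\<close>; the same coordinates give explicit
  linear extensions of \<open>w \<mapsto> x \<barwedge> w\<close> and of \<open>\<omega>~\<close>, which makes \<open>\<ell>\<^sub>x\<^sub>y\<close> computable.

  The key tool is the functional \<open>\<Phi> = \<omega>(x, y, \<zeta>\<^sup>-\<^sup>2 -) \<otimes> \<omega>~(x \<barwedge> -)\<close> on \<open>V\<^sup>\<otimes>\<^sup>3\<close>. By the quadratic
  Pluecker relation for \<open>\<omega>\<close> it kills \<open>e\<^sub>1 \<barwedge> e\<^sub>2 \<barwedge> e\<^sub>3\<close>, hence all of \<open>\<Upsilon>\<^sup>(\<^sup>3\<^sup>)\<close>, and it kills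
  \<open>w = \<zeta>\<^sup>2(y) \<otimes> (v \<barwedge> u)\<close> because \<open>\<omega>(x, y, y) = 0\<close>. The hypothesis therefore gives
  \<open>\<Phi>(Y\<^sub>2\<^sub>3 Y\<^sub>1\<^sub>2 w) = 0\<close>. Evaluating \<open>\<Phi>(Y\<^sub>2\<^sub>3 (m \<otimes> s))\<close> for \<open>m \<in> I\<^sub>2\<close> with the Cramer relation
  \<open>\<omega>(y,p,r) x - \<omega>(x,p,r) y + \<omega>(x,y,r) p - \<omega>(x,y,p) r = 0\<close>, and using
  \<open>Y' = (\<zeta> \<otimes> \<zeta>)\<inverse> Y (\<zeta> \<otimes> \<zeta>)\<close>, this equation is exactly
  \<open>(\<ell>\<^sub>x\<^sub>x \<and> \<ell>'\<^sub>y\<^sub>y - \<ell>\<^sub>x\<^sub>y \<and> \<ell>'\<^sub>x\<^sub>y)(u, v) = 0\<close>.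
\<close>

section \<open>Coordinates of tensors\<close>

lemma sum_UNIV_prod:
  "(\<Sum>k\<in>(UNIV :: ('a::finite \<times> 'b::finite) set). f k) = (\<Sum>i\<in>UNIV. \<Sum>j\<in>UNIV. f (i, j))"
  by (simp add: sum.cartesian_product)

lemma sum_if_zero: "(\<Sum>x\<in>A. if P then f x else 0) = (if P then sum f A else 0)"
  by simp

lemma tensor2_nth [simp]: "tensor2 x y $ (i, j) = x $ i * y $ j"
  by (simp add: tensor2_def)

lemma tensor3_nth [simp]: "tensor3 x y z $ (i, j, l) = x $ i * y $ j * z $ l"
  by (simp add: tensor3_def)

lemma tensor21_nth [simp]: "tensor21 m x $ (i, j, l) = m $ (i, j) * x $ l"
  by (simp add: tensor21_def)

lemma tensor12_nth [simp]: "tensor12 x m $ (i, j, l) = x $ i * m $ (j, l)"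
  by (simp add: tensor12_def)

lemma tensor21_tensor2: "tensor21 (tensor2 x y) z = tensor3 x y z"
  by (simp add: vec_eq_iff)

lemma tensor12_tensor2: "tensor12 x (tensor2 y z) = tensor3 x y z"
  by (simp add: vec_eq_iff mult.assoc)

lemma tensor2_add_left: "tensor2 (x + x') y = tensor2 x y + tensor2 x' y"
  by (simp add: vec_eq_iff algebra_simps)

lemma tensor2_scale_left: "tensor2 (c *s x) y = c *s tensor2 x y"
  by (simp add: vec_eq_iff mult.assoc)

lemma tensor12_diff_right: "tensor12 x (m - m') = tensor12 x m - tensor12 x m'"
  by (simp add: vec_eq_iff algebra_simps)

lemma matrix_vector_mult_prod_nth:
  "(A *v t) $ (i, j) = (\<Sum>i'\<in>UNIV. \<Sum>j'\<in>UNIV. A $ (i, j) $ (i', j') * t $ (i', j'))"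
  by (simp add: matrix_vector_mult_def sum_UNIV_prod)

lemma mat_matrix_vector_mult: "mat q *v x = q *s x"
  by (simp add: vec_eq_iff matrix_vector_mult_def mat_def if_distrib if_distribR cong: if_cong)

lemma kron_tensor2: "kron A B *v tensor2 x y = tensor2 (A *v x) (B *v y)"
  unfolding vec_eq_iff split_paired_All matrix_vector_mult_prod_nth
  by (simp add: kron_def matrix_vector_mult_def sum_product algebra_simps)

lemma kron_mult: "kron A B ** kron C D = kron (A ** C) (B ** D)"
  by (simp add: vec_eq_iff kron_def matrix_matrix_mult_def sum_UNIV_prod sum_product algebra_simps)

lemma kron_mat_1: "kron (mat 1) (mat 1) = mat 1"
  by (auto simp add: vec_eq_iff kron_def mat_def)

lemma lift12_tensor21: "lift12 A *v tensor21 m x = tensor21 (A *v m) x"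
  by (simp add: vec_eq_iff lift12_def matrix_vector_mult_def sum_UNIV_prod
      sum_distrib_right mult.assoc if_distrib if_distribR cong: if_cong)

lemma lift12_kron_tensor3: "lift12 (kron A B) *v tensor3 x y z = tensor3 (A *v x) (B *v y) z"
  by (simp flip: tensor21_tensor2 add: lift12_tensor21 kron_tensor2)

lemma lift12_kron_tensor12:
  "lift12 (kron A B) *v tensor12 x m = tensor12 (A *v x) (kron B (mat 1) *v m)"
  unfolding vec_eq_iff split_paired_All
  by (simp add: lift12_def kron_def mat_def matrix_vector_mult_def sum_UNIV_prod sum_distrib_left
      mult_ac if_distrib if_distribR sum_if_zero cong: if_cong) (intro allI sum.swap)

lemma lift12_mult: "lift12 A ** lift12 B = lift12 (A ** B)"
  by (simp add: vec_eq_iff lift12_def matrix_matrix_mult_def sum_UNIV_prod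
      sum_distrib_right if_distrib if_distribR cong: if_cong)

lemma lift12_mat_1: "lift12 (mat 1) = mat 1"
  by (auto simp add: vec_eq_iff lift12_def mat_def)

lemma lift12_kron_inverse:
  "A ** A' = mat 1 \<Longrightarrow> B ** B' = mat 1 \<Longrightarrow> lift12 (kron A B) ** lift12 (kron A' B') = mat 1"
  by (simp add: lift12_mult kron_mult kron_mat_1 lift12_mat_1)

definition slice :: "'k^('a::finite \<times> 'b::finite) \<Rightarrow> 'a \<Rightarrow> 'k^'b" where
  "slice t i = (\<chi> j. t $ (i, j))"

lemma slice_nth [simp]: "slice t i $ j = t $ (i, j)"
  by (simp add: slice_def)

lemma slice_zero [simp]: "slice 0 i = 0"
  by (simp add: vec_eq_iff)

lemma slice_add [simp]: "slice (t + u) i = slice t i + slice u i"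
  by (simp add: vec_eq_iff)

lemma slice_scale [simp]: "slice (c *s t) i = c *s slice t i"
  by (simp add: vec_eq_iff)

lemma slice_tensor2: "slice (tensor2 x y) i = x $ i *s y"
  by (simp add: vec_eq_iff)

lemma slice_tensor12: "slice (tensor12 x m) i = x $ i *s m"
  by (simp add: vec_eq_iff)

lemma slice_tensor21: "slice (tensor21 m x) i = tensor2 (slice m i) x"
  by (simp add: vec_eq_iff)

lemma slice_lift23: "slice (lift23 A *v t) i = A *v slice t i"
  unfolding vec_eq_iff split_paired_All
  by (simp add: lift23_def matrix_vector_mult_def sum_UNIV_prod if_distrib if_distribR sum_if_zero
      cong: if_cong)

section \<open>Linear forms and contraction\<close>

lemma linear_formI:
  "(\<And>u v. f (u + v) = f u + f v) \<Longrightarrow> (\<And>c u. f (c *s u) = c * f u) \<Longrightarrow> linear_form f"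
  by (simp add: linear_form_def)

lemma linear_form_add: "linear_form f \<Longrightarrow> f (u + v) = f u + f v"
  by (simp add: linear_form_def)

lemma linear_form_scale: "linear_form f \<Longrightarrow> f (c *s u) = c * f u"
  by (simp add: linear_form_def)

lemma linear_form_zero: "linear_form f \<Longrightarrow> f 0 = 0"
  using linear_form_scale[of f 0 0] by simp

lemma linear_form_diff: "linear_form f \<Longrightarrow> f (u - v) = f u - f v"
  using linear_form_add[of f "u - v" v] by simp

lemma linear_form_sum: "linear_form f \<Longrightarrow> f (\<Sum>i\<in>A. g i) = (\<Sum>i\<in>A. f (g i))"
  by (induction A rule: infinite_finite_induct) (simp_all add: linear_form_zero linear_form_add)

lemma linear_form_expansion:
  assumes "linear_form f"
  shows "f v = (\<Sum>i\<in>UNIV. v $ i * f (axis i 1))"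
proof -
  have "f v = f (\<Sum>i\<in>UNIV. v $ i *s axis i 1)"
    by (simp add: basis_expansion)
  also have "\<dots> = (\<Sum>i\<in>UNIV. v $ i * f (axis i 1))"
    by (simp add: linear_form_sum[OF assms] linear_form_scale[OF assms])
  finally show ?thesis .
qed

lemma linear_form_matrix_vector_mult: "linear_form f \<Longrightarrow> linear_form (\<lambda>v. f (A *v v))"
  by (simp add: linear_form_def matrix_vector_right_distrib vector_scalar_commute)

lemma linear_form_tensor2_left: "linear_form f \<Longrightarrow> linear_form (\<lambda>x. f (tensor2 x y))"
  by (simp add: linear_form_def tensor2_add_left tensor2_scale_left)

lemma linear_form_eq_on_span:
  assumes "linear_form f" "linear_form g" "v \<in> vec.span S" "\<And>s. s \<in> S \<Longrightarrow> f s = g s"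
  shows "f v = g v"
  using assms(3)
proof (induction rule: vec.span_induct)
  show "vec.subspace {v. f v = g v}"
    using assms(1,2)
    by (simp add: vec.subspace_def linear_form_zero linear_form_add linear_form_scale)
qed (use assms(4) in simp)

definition contract :: "('k::field^'a::finite \<Rightarrow> 'k) \<Rightarrow> ('k^'b::finite \<Rightarrow> 'k) \<Rightarrow> 'k^('a \<times> 'b) \<Rightarrow> 'k"
  where "contract \<phi> \<psi> t = (\<Sum>i\<in>UNIV. \<phi> (axis i 1) * \<psi> (slice t i))"

lemma linear_form_contract: "linear_form \<psi> \<Longrightarrow> linear_form (contract \<phi> \<psi>)"
  by (simp add: linear_form_def contract_def algebra_simps sum.distrib sum_distrib_left)

lemma contract_tensor2:
  "linear_form \<phi> \<Longrightarrow> linear_form \<psi> \<Longrightarrow> contract \<phi> \<psi> (tensor2 x y) = \<phi> x * \<psi> y"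
  by (simp add: contract_def slice_tensor2 linear_form_scale linear_form_expansion[of \<phi> x]
      sum_distrib_left mult_ac)

lemma contract_tensor12:
  "linear_form \<phi> \<Longrightarrow> linear_form \<psi> \<Longrightarrow> contract \<phi> \<psi> (tensor12 x m) = \<phi> x * \<psi> m"
  by (simp add: contract_def slice_tensor12 linear_form_scale linear_form_expansion[of \<phi> x]
      sum_distrib_left mult_ac)

lemma contract_lift23: "contract \<phi> \<psi> (lift23 A *v t) = contract \<phi> (\<lambda>m. \<psi> (A *v m)) t"
  by (simp add: contract_def slice_lift23)

lemma contract_tensor21: "contract \<phi> \<psi> (tensor21 m x) = contract \<phi> (\<lambda>y. \<psi> (tensor2 y x)) m"
  by (simp add: contract_def slice_tensor21)

section \<open>Alternating tensors\<close>

definition alternating2 :: "('k::field^('n::finite \<times> 'n)) set" where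
  "alternating2 = {m. \<forall>i j. m $ (i, j) + m $ (j, i) = 0 \<and> m $ (i, i) = 0}"

definition alternating12 :: "('k::field^('n::finite \<times> 'n \<times> 'n)) set" where
  "alternating12 = {t. \<forall>i j l. t $ (i, j, l) + t $ (j, i, l) = 0 \<and> t $ (i, i, l) = 0}"

definition alternating23 :: "('k::field^('n::finite \<times> 'n \<times> 'n)) set" where
  "alternating23 = {t. \<forall>i. slice t i \<in> alternating2}"

definition antisym3 :: "'k::field^'n \<Rightarrow> 'k^'n \<Rightarrow> 'k^'n \<Rightarrow> 'k^('n::finite \<times> 'n \<times> 'n)" where
  "antisym3 x y z = tensor3 x y z + tensor3 y z x + tensor3 z x y
     - tensor3 x z y - tensor3 y x z - tensor3 z y x"

lemma add_add_swap_eq_0: "a + b = 0 \<Longrightarrow> c + d = 0 \<Longrightarrow> (a + c) + (b + d) = (0::'a::ab_group_add)"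
  by (metis add.assoc add.left_commute add_0)

lemma subspace_alternating2: "vec.subspace alternating2"
  unfolding vec.subspace_def alternating2_def
  by (simp add: add_add_swap_eq_0 flip: distrib_left)

lemma subspace_alternating12: "vec.subspace alternating12"
  unfolding vec.subspace_def alternating12_def
  by (simp add: add_add_swap_eq_0 flip: distrib_left)

lemma subspace_alternating23: "vec.subspace alternating23"
  using subspace_alternating2
  unfolding vec.subspace_def alternating23_def by auto

lemma tensor2_antisym_alternating2: "tensor2 x y - tensor2 y x \<in> alternating2"
  by (simp add: alternating2_def mult.commute)

lemma tensor21_alternating12: "m \<in> alternating2 \<Longrightarrow> tensor21 m x \<in> alternating12"
  by (simp add: alternating2_def alternating12_def flip: distrib_right)

lemma tensor12_alternating23: "m \<in> alternating2 \<Longrightarrow> tensor12 x m \<in> alternating23"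
  by (simp add: alternating2_def alternating23_def slice_tensor12 flip: distrib_left)

lemma matrix_vector_mult_span_subspace:
  assumes "v \<in> vec.span S" "vec.subspace T" "\<And>s. s \<in> S \<Longrightarrow> A *v s \<in> T"
  shows "A *v v \<in> T"
proof -
  have "A *v v \<in> vec.span ((*v) A ` S)"
    using assms(1) by (simp add: vec.span_image)
  moreover have "vec.span ((*v) A ` S) \<subseteq> T"
    using assms(2,3) by (intro vec.span_minimal) auto
  ultimately show ?thesis
    by blast
qed

locale enum3 =
  fixes a b c :: "'n::finite"
  assumes UNIV_eq: "(UNIV :: 'n set) = {a, b, c}"
    and distinct: "a \<noteq> b" "b \<noteq> c" "a \<noteq> c"
begin

lemma index_cases: "i = a \<or> i = b \<or> i = c"
proof -
  have "i \<in> {a, b, c}"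
    unfolding UNIV_eq[symmetric] by (rule UNIV_I)
  then show ?thesis
    by simp
qed

lemma sum_UNIV_eq: "sum f UNIV = f a + f b + f c"
proof -
  have "sum f UNIV = sum f {a, b, c}"
    by (simp only: UNIV_eq)
  also have "\<dots> = f a + f b + f c"
    using distinct by (simp add: add.assoc)
  finally show ?thesis .
qed

lemma vec_eq_iff_enum3: "x = y \<longleftrightarrow> x $ a = y $ a \<and> x $ b = y $ b \<and> x $ c = y $ c"
  unfolding vec_eq_iff by (metis index_cases)

lemma basis_expansion_enum3:
  fixes x :: "'k::ring_1^'n"
  shows "x = x $ a *s axis a 1 + x $ b *s axis b 1 + x $ c *s axis c 1"
  using basis_expansion[of x] by (simp add: sum_UNIV_eq)

lemma alternating_tensor_eq:
  assumes "t \<in> alternating12" "t \<in> alternating23"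
  shows "t = t $ (a, b, c) *s antisym3 (axis a 1) (axis b 1) (axis c 1)"
proof -
  have sum12: "t $ (i, j, l) + t $ (j, i, l) = 0" and sum23: "t $ (i, j, l) + t $ (i, l, j) = 0"
    and diag12: "t $ (i, i, l) = 0" and diag23: "t $ (i, j, j) = 0" for i j l
    using assms unfolding alternating12_def alternating23_def alternating2_def by auto
  have swap12: "t $ (j, i, l) = - t $ (i, j, l)" and swap23: "t $ (i, l, j) = - t $ (i, j, l)"
    for i j l
    using sum12[of i j l] sum23[of i j l] by (simp_all add: eq_neg_iff_add_eq_0 add.commute)
  have diag13: "t $ (i, j, i) = 0" for i j
    using swap12[of j i i] diag23[of j i] by simp
  have acb: "t $ (a, c, b) = - t $ (a, b, c)" and bac: "t $ (b, a, c) = - t $ (a, b, c)"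
    using swap12[of a b c] swap23[of a b c] by simp_all
  have cab: "t $ (c, a, b) = t $ (a, b, c)"
    using swap12[of a c b] acb by simp
  have cba: "t $ (c, b, a) = - t $ (a, b, c)"
    using swap23[of c a b] cab by simp
  have bca: "t $ (b, c, a) = t $ (a, b, c)"
    using swap12[of c b a] cba by simp
  have "t $ (i, j, l) = (t $ (a, b, c) *s antisym3 (axis a 1) (axis b 1) (axis c 1)) $ (i, j, l)"
    for i j l
    using index_cases[of i] index_cases[of j] index_cases[of l]
    by (elim disjE) (simp_all add: antisym3_def axis_def diag12 diag23 diag13 acb bac cab cba bca
        distinct distinct[symmetric])
  then show ?thesis
    unfolding vec_eq_iff split_paired_All by blast
qed

end

section \<open>Alternating trilinear forms in dimension three\<close>

locale alternating_form3 = enum3 a b c for a b c :: "'n::finite" +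
  fixes \<omega> :: "'k::field^'n \<Rightarrow> 'k^'n \<Rightarrow> 'k^'n \<Rightarrow> 'k"
  assumes alternating: "alternating3 \<omega>"
begin

lemma form_add [simp]:
  "\<omega> (u + v) y z = \<omega> u y z + \<omega> v y z"
  "\<omega> x (u + v) z = \<omega> x u z + \<omega> x v z"
  "\<omega> x y (u + v) = \<omega> x y u + \<omega> x y v"
  using alternating unfolding alternating3_def trilinear_def linear_form_def by auto

lemma form_scale [simp]:
  "\<omega> (r *s u) y z = r * \<omega> u y z"
  "\<omega> x (r *s u) z = r * \<omega> x u z"
  "\<omega> x y (r *s u) = r * \<omega> x y u"
  using alternating unfolding alternating3_def trilinear_def linear_form_def by auto

lemma form_degenerate [simp]: "\<omega> x x z = 0" "\<omega> x y y = 0" "\<omega> x y x = 0"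
  using alternating unfolding alternating3_def by auto

lemma linear_form_form: "linear_form (\<omega> x y)"
  using alternating unfolding alternating3_def trilinear_def by simp

lemma form_swap12: "\<omega> y x z = - \<omega> x y z"
proof -
  have "0 = \<omega> (x + y) (x + y) z"
    by simp
  also have "\<dots> = \<omega> x y z + \<omega> y x z"
    by (simp only: form_add) simp
  finally show ?thesis
    by (simp add: eq_neg_iff_add_eq_0 add.commute)
qed

lemma form_swap23: "\<omega> x z y = - \<omega> x y z"
proof -
  have "0 = \<omega> x (y + z) (y + z)"
    by simp
  also have "\<dots> = \<omega> x y z + \<omega> x z y"
    by (simp only: form_add) simp
  finally show ?thesis
    by (simp add: eq_neg_iff_add_eq_0 add.commute)
qed

definition volume :: 'k where
  "volume = \<omega> (axis a 1) (axis b 1) (axis c 1)"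

lemma form_eq_antisym3: "\<omega> x y z = volume * antisym3 x y z $ (a, b, c)"
proof -
  have "\<omega> (axis b 1) (axis a 1) (axis c 1) = - volume"
    "\<omega> (axis a 1) (axis c 1) (axis b 1) = - volume"
    "\<omega> (axis c 1) (axis b 1) (axis a 1) = - volume"
    "\<omega> (axis b 1) (axis c 1) (axis a 1) = volume"
    "\<omega> (axis c 1) (axis a 1) (axis b 1) = volume"
    unfolding volume_def by (metis form_swap12 form_swap23 minus_minus)+
  then have "\<omega> (x $ a *s axis a 1 + x $ b *s axis b 1 + x $ c *s axis c 1)
      (y $ a *s axis a 1 + y $ b *s axis b 1 + y $ c *s axis c 1)
      (z $ a *s axis a 1 + z $ b *s axis b 1 + z $ c *s axis c 1)
    = volume * antisym3 x y z $ (a, b, c)"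
    by (simp add: antisym3_def flip: volume_def) (simp add: algebra_simps)
  then show ?thesis
    by (simp flip: basis_expansion_enum3)
qed

lemma cramer_identity: "\<omega> y p r *s x - \<omega> x p r *s y + \<omega> x y r *s p - \<omega> x y p *s r = 0"
  by (simp add: vec_eq_iff_enum3 form_eq_antisym3 antisym3_def) (simp add: algebra_simps)

lemma pluecker_identity: "\<omega> x y p * \<omega> x r s + \<omega> x y r * \<omega> x s p + \<omega> x y s * \<omega> x p r = 0"
  by (simp add: form_eq_antisym3 antisym3_def) (simp add: algebra_simps)

end

section \<open>Twisted wedge products\<close>

lemma barwedge2_in_I2: "barwedge2 Z x y \<in> I2 Z"
  unfolding I2_def by (rule vec.span_base) auto

lemma subspace_I2: "vec.subspace (I2 Z)"
  unfolding I2_def by (rule vec.subspace_span)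

lemma I2_sum_list: "w \<in> I2 Z \<Longrightarrow> \<exists>ps. w = sum_list (map (\<lambda>(x, y). barwedge2 Z x y) ps)"
  unfolding I2_def
proof (induction rule: vec.span_induct_alt)
  case base
  show ?case
    by (rule exI[of _ "[]"]) simp
next
  case (step r u w)
  then obtain x y ps where "u = barwedge2 Z x y" "w = sum_list (map (\<lambda>(x, y). barwedge2 Z x y) ps)"
    by auto
  moreover have "r *s barwedge2 Z x y = barwedge2 Z (r *s x) y"
    by (simp add: barwedge2_def vector_scalar_commute vec_eq_iff algebra_simps)
  ultimately show ?case
    by (intro exI[of _ "(r *s x, y) # ps"]) simp
qed

lemma lift12_kron_antisym3: "lift12 (kron (Z ** Z) Z) *v antisym3 x y z = barwedge3 Z x y z"
  by (simp add: antisym3_def barwedge3_def matrix_vector_right_distrib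
      matrix_vector_mult_diff_distrib lift12_kron_tensor3 matrix_vector_mul_assoc)

text \<open>The six terms of \<open>x \<barwedge> p \<barwedge> r\<close> group as \<open>\<zeta>\<^sup>2x \<otimes> (p \<barwedge> r) + ((\<zeta> \<otimes> \<zeta>)(p \<barwedge> r)) \<otimes> x\<close>
  minus \<open>(\<zeta> \<otimes> 1)(p \<barwedge> r)\<close> with \<open>\<zeta>x\<close> inserted in the middle slot; each group is linear in \<open>p \<barwedge> r\<close>.\<close>

definition barwedge_vw_lin :: "'k::field^'n^'n \<Rightarrow> 'k^'n \<Rightarrow> 'k^('n::finite \<times> 'n) \<Rightarrow> 'k^('n \<times> 'n \<times> 'n)"
  where "barwedge_vw_lin Z x m = vec_lambda (\<lambda>(i, j, l). ((Z ** Z) *v x) $ i * m $ (j, l)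
      + (kron Z Z *v m) $ (i, j) * x $ l - (kron Z (mat 1) *v m) $ (i, l) * (Z *v x) $ j)"

lemma barwedge_vw_lin_add:
  "barwedge_vw_lin Z x (m + m') = barwedge_vw_lin Z x m + barwedge_vw_lin Z x m'"
  by (simp add: vec_eq_iff barwedge_vw_lin_def matrix_vector_right_distrib algebra_simps)

lemma barwedge_vw_lin_scale: "barwedge_vw_lin Z x (r *s m) = r *s barwedge_vw_lin Z x m"
  by (simp add: vec_eq_iff barwedge_vw_lin_def vector_scalar_commute algebra_simps)

lemma barwedge_vw_lin_tensor2: "barwedge_vw_lin Z x (tensor2 p r)
    = tensor3 ((Z ** Z) *v x) p r + tensor3 (Z *v p) (Z *v r) x - tensor3 (Z *v p) (Z *v x) r"
  by (simp add: vec_eq_iff barwedge_vw_lin_def kron_tensor2 mult_ac)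

lemma barwedge_vw_lin_barwedge2: "barwedge_vw_lin Z x (barwedge2 Z p r) = barwedge3 Z x p r"
proof -
  have "barwedge_vw_lin Z x (barwedge2 Z p r)
      = barwedge_vw_lin Z x (tensor2 (Z *v p) r) - barwedge_vw_lin Z x (tensor2 (Z *v r) p)"
    using barwedge_vw_lin_add[of Z x "barwedge2 Z p r" "tensor2 (Z *v r) p"]
    by (simp add: barwedge2_def)
  then show ?thesis
    by (simp add: barwedge_vw_lin_tensor2 barwedge3_def matrix_vector_mul_assoc algebra_simps)
qed

lemma barwedge_vw_lin_sum_list:
  "barwedge_vw_lin Z x (sum_list (map (\<lambda>(p, r). barwedge2 Z p r) ps))
    = sum_list (map (\<lambda>(p, r). barwedge3 Z x p r) ps)"
proof (induction ps)
  case Nil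
  show ?case
    using barwedge_vw_lin_scale[of Z x 0 0] by simp
qed (auto simp: barwedge_vw_lin_add barwedge_vw_lin_barwedge2)

lemma barwedge_vw_eq: "w \<in> I2 Z \<Longrightarrow> barwedge_vw Z x w = barwedge_vw_lin Z x w"
  unfolding barwedge_vw_def
  by (rule the_equality) (use I2_sum_list barwedge_vw_lin_sum_list in metis)+

lemma omega_tilde_sum_list:
  assumes "linear_form \<Omega>" "\<And>x y z. \<Omega> (barwedge3 Z x y z) = \<omega> x y z"
  shows "omega_tilde Z \<omega> (sum_list (map (\<lambda>(x, y, z). barwedge3 Z x y z) us))
    = \<Omega> (sum_list (map (\<lambda>(x, y, z). barwedge3 Z x y z) us))"
proof -
  have \<Omega>_sum_list: "\<Omega> (sum_list (map (\<lambda>(x, y, z). barwedge3 Z x y z) vs))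
      = sum_list (map (\<lambda>(x, y, z). \<omega> x y z) vs)" for vs
    by (induction vs) (auto simp: linear_form_zero linear_form_add assms)
  show ?thesis
    unfolding omega_tilde_def by (rule the_equality) (use \<Omega>_sum_list in metis)+
qed

locale zeta =
  fixes Z Zi :: "'k::field^'n::finite^'n"
  assumes Z_Zi: "Z ** Zi = mat 1" and Zi_Z: "Zi ** Z = mat 1"
begin

lemma Zi_Z_apply [simp]: "Zi *v (Z *v x) = x"
  by (simp add: matrix_vector_mul_assoc Zi_Z)

lemma Z_Zi_apply [simp]: "Z *v (Zi *v x) = x"
  by (simp add: matrix_vector_mul_assoc Z_Zi)

lemma Zi2_Z2_apply [simp]: "(Zi ** Zi) *v ((Z ** Z) *v x) = x"
  by (simp flip: matrix_vector_mul_assoc)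

lemma kron_inverse_apply [simp]: "kron Zi Zi *v (kron Z Z *v t) = t"
  by (simp add: matrix_vector_mul_assoc kron_mult Zi_Z kron_mat_1)

lemma kron_conjugate_diff:
  "mat q - kron Zi Zi ** R ** kron Z Z = kron Zi Zi ** (mat q - R) ** kron Z Z"
  unfolding matrix_eq
  by (simp flip: matrix_vector_mul_assoc add: matrix_vector_mult_diff_rdistrib
      matrix_vector_mult_diff_distrib mat_matrix_vector_mult vector_scalar_commute)

lemma kron_inverse_barwedge2: "kron Zi Zi *v barwedge2 Z x y = barwedge2 Z (Zi *v x) (Zi *v y)"
  by (simp add: barwedge2_def matrix_vector_mult_diff_distrib kron_tensor2)

lemma kron_inverse_I2:
  assumes "m \<in> I2 Z"
  shows "kron Zi Zi *v m \<in> I2 Z"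
  using assms[unfolded I2_def] subspace_I2
  by (rule matrix_vector_mult_span_subspace) (auto simp: kron_inverse_barwedge2 barwedge2_in_I2)

definition untwist :: "'k^('n \<times> 'n \<times> 'n)^('n \<times> 'n \<times> 'n)" where
  "untwist = lift12 (kron (Zi ** Zi) Zi)"

lemma retwist_untwist: "lift12 (kron (Z ** Z) Z) *v (untwist *v t) = t"
proof -
  have "(Z ** Z) ** (Zi ** Zi) = mat 1"
    by (metis Z_Zi matrix_mul_assoc matrix_mul_rid)
  then show ?thesis
    by (simp add: untwist_def matrix_vector_mul_assoc lift12_kron_inverse Z_Zi)
qed

lemma untwist_barwedge3: "untwist *v barwedge3 Z x y z = antisym3 x y z"
proof -
  have "(Zi ** Zi) ** (Z ** Z) = mat 1"
    by (metis Zi_Z matrix_mul_assoc matrix_mul_rid)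
  then show ?thesis
    by (simp flip: lift12_kron_antisym3
        add: untwist_def matrix_vector_mul_assoc lift12_kron_inverse Zi_Z)
qed

lemma untwist_I2_tensor_V:
  assumes "t \<in> I2_tensor_V Z"
  shows "untwist *v t \<in> alternating12"
proof -
  have alt: "kron (Zi ** Zi) Zi *v m \<in> alternating2" if "m \<in> I2 Z" for m
    using that unfolding I2_def
    by (rule matrix_vector_mult_span_subspace[OF _ subspace_alternating2])
      (auto simp: barwedge2_def matrix_vector_mult_diff_distrib kron_tensor2
        tensor2_antisym_alternating2 simp flip: matrix_vector_mul_assoc)
  show ?thesis
    using assms unfolding I2_tensor_V_def untwist_def
    by (rule matrix_vector_mult_span_subspace[OF _ subspace_alternating12])
      (auto simp: lift12_tensor21 intro!: tensor21_alternating12 alt)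
qed

lemma untwist_V_tensor_I2:
  assumes "t \<in> V_tensor_I2 Z"
  shows "untwist *v t \<in> alternating23"
proof -
  have alt: "kron Zi (mat 1) *v m \<in> alternating2" if "m \<in> I2 Z" for m
    using that unfolding I2_def
    by (rule matrix_vector_mult_span_subspace[OF _ subspace_alternating2])
      (auto simp: barwedge2_def matrix_vector_mult_diff_distrib kron_tensor2
        tensor2_antisym_alternating2)
  show ?thesis
    using assms unfolding V_tensor_I2_def untwist_def
    by (rule matrix_vector_mult_span_subspace[OF _ subspace_alternating23])
      (auto simp: lift12_kron_tensor12 intro!: tensor12_alternating23 alt)
qed

end

locale zeta3 = zeta Z Zi + enum3 a b c
  for Z Zi :: "'k::field^'n::finite^'n" and a b c :: 'n
begin

lemma Upsilon3_multiple:
  assumes "t \<in> Upsilon3 Z"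
  obtains r where "t = r *s barwedge3 Z (axis a 1) (axis b 1) (axis c 1)"
proof
  have "untwist *v t \<in> alternating12" "untwist *v t \<in> alternating23"
    using assms untwist_I2_tensor_V untwist_V_tensor_I2 by (auto simp: Upsilon3_def)
  then have "untwist *v t = (untwist *v t) $ (a, b, c) *s antisym3 (axis a 1) (axis b 1) (axis c 1)"
    by (rule alternating_tensor_eq)
  then show "t = (untwist *v t) $ (a, b, c) *s barwedge3 Z (axis a 1) (axis b 1) (axis c 1)"
    by (metis retwist_untwist vector_scalar_commute lift12_kron_antisym3)
qed

end

section \<open>The functional \<open>\<Phi>\<close>\<close>

locale zeta3_form = zeta3 Z Zi a b c + alternating_form3 a b c \<omega>
  for Z Zi :: "'k::field^'n::finite^'n" and a b c :: 'n
    and \<omega> :: "'k^'n \<Rightarrow> 'k^'n \<Rightarrow> 'k^'n \<Rightarrow> 'k"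
begin

definition omega_lin :: "'k^('n \<times> 'n \<times> 'n) \<Rightarrow> 'k" where
  "omega_lin t = volume * (untwist *v t) $ (a, b, c)"

lemma linear_form_omega_lin: "linear_form omega_lin"
  by (rule linear_formI)
    (simp_all add: omega_lin_def matrix_vector_right_distrib vector_scalar_commute algebra_simps)

lemma omega_lin_barwedge3: "omega_lin (barwedge3 Z x y z) = \<omega> x y z"
  by (simp add: omega_lin_def untwist_barwedge3 form_eq_antisym3)

definition omega_wedge :: "'k^'n \<Rightarrow> 'k^('n \<times> 'n) \<Rightarrow> 'k" where
  "omega_wedge x m = omega_lin (barwedge_vw_lin Z x m)"

lemma linear_form_omega_wedge: "linear_form (omega_wedge x)"
  using linear_form_omega_lin
  by (simp add: linear_form_def omega_wedge_def barwedge_vw_lin_add barwedge_vw_lin_scale)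

lemma omega_wedge_barwedge2: "omega_wedge x (barwedge2 Z p r) = \<omega> x p r"
  by (simp add: omega_wedge_def barwedge_vw_lin_barwedge2 omega_lin_barwedge3)

lemma ell_eq_omega_wedge:
  assumes "Y *v tensor2 (Z *v y) z \<in> I2 Z"
  shows "ell Z \<omega> Y x y z = omega_wedge x (Y *v tensor2 (Z *v y) z)"
proof -
  obtain ps where "Y *v tensor2 (Z *v y) z = sum_list (map (\<lambda>(p, r). barwedge2 Z p r) ps)"
    using I2_sum_list[OF assms] by blast
  then have "barwedge_vw_lin Z x (Y *v tensor2 (Z *v y) z)
      = sum_list (map (\<lambda>(x, p, r). barwedge3 Z x p r) (map (\<lambda>(p, r). (x, p, r)) ps))"
    by (simp add: barwedge_vw_lin_sum_list) (simp add: comp_def split_def)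
  then show ?thesis
    by (simp only: ell_def barwedge_vw_eq[OF assms] omega_wedge_def
        omega_tilde_sum_list[OF linear_form_omega_lin omega_lin_barwedge3])
qed

definition omega_contract :: "'k^'n \<Rightarrow> 'k^'n \<Rightarrow> 'k^('n \<times> 'n \<times> 'n) \<Rightarrow> 'k" where
  "omega_contract x y = contract (\<lambda>v. \<omega> x y ((Zi ** Zi) *v v)) (omega_wedge x)"

lemma linear_form_omega_contract: "linear_form (omega_contract x y)"
  unfolding omega_contract_def by (rule linear_form_contract[OF linear_form_omega_wedge])

lemma omega_contract_tensor12:
  "omega_contract x y (tensor12 v m) = \<omega> x y ((Zi ** Zi) *v v) * omega_wedge x m"
  unfolding omega_contract_def
  by (rule contract_tensor12[OF linear_form_matrix_vector_mult[OF linear_form_form]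
        linear_form_omega_wedge])

lemma omega_contract_barwedge3: "omega_contract x y (barwedge3 Z p r s) = 0"
proof -
  define A where "A r s = omega_wedge x (tensor2 (Z *v r) s)" for r s
  have A: "A r s - A s r = \<omega> x r s" for r s
    using linear_form_diff[OF linear_form_omega_wedge, of x "tensor2 (Z *v r) s" "tensor2 (Z *v s) r"]
    by (simp add: A_def omega_wedge_barwedge2 flip: barwedge2_def)
  have "omega_contract x y (barwedge3 Z p r s)
      = \<omega> x y p * (A r s - A s r) + \<omega> x y r * (A s p - A p s) + \<omega> x y s * (A p r - A r p)"
    by (simp add: barwedge3_def linear_form_add[OF linear_form_omega_contract]
        linear_form_diff[OF linear_form_omega_contract] omega_contract_tensor12 A_def algebra_simps
        flip: tensor12_tensor2)
  also have "\<dots> = 0"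
    by (simp add: A pluecker_identity)
  finally show ?thesis .
qed

lemma omega_contract_Upsilon3: "t \<in> Upsilon3 Z \<Longrightarrow> omega_contract x y t = 0"
  by (erule Upsilon3_multiple)
    (simp add: linear_form_scale[OF linear_form_omega_contract] omega_contract_barwedge3)

lemma contract_omega_I2:
  assumes "m \<in> I2 Z" "linear_form B"
  shows "contract (\<lambda>v. \<omega> x y ((Zi ** Zi) *v v)) B m
    = omega_wedge y (kron Zi Zi *v m) * B (Z *v x) - omega_wedge x (kron Zi Zi *v m) * B (Z *v y)"
proof (rule linear_form_eq_on_span[OF _ _ assms(1)[unfolded I2_def]])
  show "linear_form (contract (\<lambda>v. \<omega> x y ((Zi ** Zi) *v v)) B)"
    by (rule linear_form_contract[OF assms(2)])
  show "linear_form (\<lambda>m. omega_wedge y (kron Zi Zi *v m) * B (Z *v x)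
      - omega_wedge x (kron Zi Zi *v m) * B (Z *v y))"
    using linear_form_matrix_vector_mult[OF linear_form_omega_wedge, of _ "kron Zi Zi"]
    by (simp add: linear_form_def algebra_simps)
  fix g
  assume "g \<in> {barwedge2 Z p r |p r. True}"
  then obtain p' r' where "g = barwedge2 Z p' r'"
    by blast
  define p r where "p = Zi *v p'" and "r = Zi *v r'"
  have g: "g = barwedge2 Z (Z *v p) (Z *v r)"
    by (simp add: \<open>g = barwedge2 Z p' r'\<close> p_def r_def)
  have "B (Z *v (\<omega> y p r *s x - \<omega> x p r *s y + \<omega> x y r *s p - \<omega> x y p *s r)) = 0"
    by (simp add: cramer_identity linear_form_zero[OF assms(2)])
  then have cramer: "\<omega> y p r * B (Z *v x) - \<omega> x p r * B (Z *v y)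
      + \<omega> x y r * B (Z *v p) - \<omega> x y p * B (Z *v r) = 0"
    by (simp add: matrix_vector_right_distrib matrix_vector_mult_diff_distrib vector_scalar_commute
        linear_form_add[OF assms(2)] linear_form_diff[OF assms(2)] linear_form_scale[OF assms(2)])
  have lhs: "contract (\<lambda>v. \<omega> x y ((Zi ** Zi) *v v)) B g
      = \<omega> x y p * B (Z *v r) - \<omega> x y r * B (Z *v p)"
    by (simp only: g barwedge2_def linear_form_diff[OF linear_form_contract[OF assms(2)]]
        contract_tensor2[OF linear_form_matrix_vector_mult[OF linear_form_form] assms(2)])
      (simp flip: matrix_vector_mul_assoc)
  have rhs: "omega_wedge y (kron Zi Zi *v g) = \<omega> y p r" "omega_wedge x (kron Zi Zi *v g) = \<omega> x p r"
    by (simp_all add: g kron_inverse_barwedge2 omega_wedge_barwedge2)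
  show "contract (\<lambda>v. \<omega> x y ((Zi ** Zi) *v v)) B g
      = omega_wedge y (kron Zi Zi *v g) * B (Z *v x) - omega_wedge x (kron Zi Zi *v g) * B (Z *v y)"
    unfolding lhs rhs using cramer by (simp add: algebra_simps)
qed

lemma omega_contract_lift23_tensor21:
  assumes "m \<in> I2 Z"
  shows "omega_contract x y (lift23 Y *v tensor21 m s)
    = omega_wedge y (kron Zi Zi *v m) * omega_wedge x (Y *v tensor2 (Z *v x) s)
      - omega_wedge x (kron Zi Zi *v m) * omega_wedge x (Y *v tensor2 (Z *v y) s)"
  unfolding omega_contract_def contract_lift23 contract_tensor21
  by (rule contract_omega_I2[OF assms
        linear_form_tensor2_left[OF linear_form_matrix_vector_mult[OF linear_form_omega_wedge]]])

lemma omega_contract_lift23_lift12: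
  assumes Y: "\<And>t. Y *v t \<in> I2 Z"
  shows "omega_contract x y (lift23 Y *v (lift12 Y *v tensor12 ((Z ** Z) *v y) (barwedge2 Z v u)))
    = wedge_forms (ell Z \<omega> Y x x) (ell Z \<omega> (kron Zi Zi ** Y ** kron Z Z) y y) u v
      - wedge_forms (ell Z \<omega> Y x y) (ell Z \<omega> (kron Zi Zi ** Y ** kron Z Z) x y) u v"
proof -
  have ell: "ell Z \<omega> Y x' y' z = omega_wedge x' (Y *v tensor2 (Z *v y') z)" for x' y' z
    using Y by (rule ell_eq_omega_wedge)
  have ell': "ell Z \<omega> (kron Zi Zi ** Y ** kron Z Z) x' y' z
      = omega_wedge x' (kron Zi Zi *v (Y *v tensor2 ((Z ** Z) *v y') (Z *v z)))" for x' y' z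
  proof -
    have "(kron Zi Zi ** Y ** kron Z Z) *v tensor2 (Z *v y') z
        = kron Zi Zi *v (Y *v tensor2 ((Z ** Z) *v y') (Z *v z))"
      by (simp add: kron_tensor2 flip: matrix_vector_mul_assoc)
    then show ?thesis
      using ell_eq_omega_wedge kron_inverse_I2[OF Y] by metis
  qed
  have lift12_eq: "lift12 Y *v tensor12 ((Z ** Z) *v y) (barwedge2 Z v u)
      = tensor21 (Y *v tensor2 ((Z ** Z) *v y) (Z *v v)) u
        - tensor21 (Y *v tensor2 ((Z ** Z) *v y) (Z *v u)) v"
    by (simp add: barwedge2_def tensor12_diff_right tensor12_tensor2 lift12_tensor21
        matrix_vector_mult_diff_distrib flip: tensor21_tensor2)
  show ?thesis
    unfolding lift12_eq
    by (simp add: matrix_vector_mult_diff_distrib linear_form_diff[OF linear_form_omega_contract]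
        omega_contract_lift23_tensor21 Y ell ell' wedge_forms_def algebra_simps)
qed

lemma wedge_forms_ell_eq:
  assumes Y: "\<And>t. Y *v t \<in> I2 Z"
    and Y_Upsilon3: "\<forall>w \<in> V_tensor_I2 Z. lift23 Y *v (lift12 Y *v w) - q *s w \<in> Upsilon3 Z"
  shows "wedge_forms (ell Z \<omega> Y x y) (ell Z \<omega> (kron Zi Zi ** Y ** kron Z Z) x y)
    = wedge_forms (ell Z \<omega> Y x x) (ell Z \<omega> (kron Zi Zi ** Y ** kron Z Z) y y)"
proof (intro ext)
  fix u v
  define w where "w = tensor12 ((Z ** Z) *v y) (barwedge2 Z v u)"
  have "w \<in> V_tensor_I2 Z"
    unfolding V_tensor_I2_def w_def by (rule vec.span_base) (blast intro: barwedge2_in_I2)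
  then have "omega_contract x y (lift23 Y *v (lift12 Y *v w) - q *s w) = 0"
    using Y_Upsilon3 omega_contract_Upsilon3 by blast
  moreover have "omega_contract x y w = 0"
    by (simp add: w_def omega_contract_tensor12)
  ultimately show "wedge_forms (ell Z \<omega> Y x y) (ell Z \<omega> (kron Zi Zi ** Y ** kron Z Z) x y) u v
    = wedge_forms (ell Z \<omega> Y x x) (ell Z \<omega> (kron Zi Zi ** Y ** kron Z Z) y y) u v"
    using omega_contract_lift23_lift12[OF Y, of x y v u]
    by (simp add: w_def linear_form_diff[OF linear_form_omega_contract]
        linear_form_scale[OF linear_form_omega_contract])
qed

end

theorem lemma2p1:
  fixes Z :: "'k::field^'n::finite^'n"
    and R :: "'k^('n\<times>'n)^('n\<times>'n)"
    and q :: 'k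
    and \<omega> :: "'k^'n \<Rightarrow> 'k^'n \<Rightarrow> 'k^'n \<Rightarrow> 'k"
    and x y :: "'k^'n"
  assumes dim3: "CARD('n) = 3"
    and Z_inv: "invertible Z"
    and q_nz: "q \<noteq> 0"
    and braid: "lift12 R ** lift23 R ** lift12 R = lift23 R ** lift12 R ** lift23 R"
    and hecke: "(R - mat q) ** (R + mat 1) = 0"
    and SVR: "range (\<lambda>w. (R - mat q) *v w) = I2 Z"
    and \<omega>_alt: "alternating3 \<omega>"
    and \<omega>_nz: "\<exists>a b c. \<omega> a b c \<noteq> 0"
    and hyp: "\<forall>w \<in> V_tensor_I2 Z.
       lift23 (mat q - R) *v (lift12 (mat q - R) *v w) - q *s w \<in> Upsilon3 Z"
  shows "wedge_forms (ell Z \<omega> (mat q - R) x y)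
           (ell Z \<omega> (mat q - kron (matrix_inv Z) (matrix_inv Z) ** R ** kron Z Z) x y)
       = wedge_forms (ell Z \<omega> (mat q - R) x x)
           (ell Z \<omega> (mat q - kron (matrix_inv Z) (matrix_inv Z) ** R ** kron Z Z) y y)"
proof -
  have "Z ** matrix_inv Z = mat 1 \<and> matrix_inv Z ** Z = mat 1"
    using Z_inv unfolding invertible_def matrix_inv_def by (rule someI_ex)
  moreover obtain a b c :: 'n where "UNIV = {a, b, c}" "a \<noteq> b" "b \<noteq> c" "a \<noteq> c"
    using dim3 card_3_iff[of "UNIV :: 'n set"] by auto
  ultimately interpret zeta3_form Z "matrix_inv Z" a b c \<omega>
    using \<omega>_alt by unfold_locales auto
  have Y: "(mat q - R) *v t \<in> I2 Z" for t
  proof -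
    have "(R - mat q) *v (0 - t) \<in> I2 Z"
      using SVR by blast
    then show ?thesis
      by (simp only: matrix_vector_mult_diff_rdistrib matrix_vector_mult_diff_distrib) simp
  qed
  show ?thesis
    unfolding kron_conjugate_diff by (rule wedge_forms_ell_eq[OF Y hyp])
qed

end
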